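(* Let $G=(V,E)$ be a finite graph (parallel edges and loops allowed) and $e\neq f$ edges of $G$, and let $E^{ef}=E\setminus\{e,f\}$. The coefficient of the monomial $\prod_{g\in E^{ef}}x_g$ in $\mathcal{M}_{ef}(1)$ equals the number of paracels $F\subseteq E^{ef}$ of $G$.
   Context: Let $\{x_g : g\in E\}$ be variables. For $F\subseteq E$, $\mathbf{x}^F=\prod_{g\in F}x_g$ and $k(F)$ is the number of connected components of $(V,F)$. For $A,B\subseteq E$, $\mathcal{T}_A^B=\sum_{F\subseteq E:\,A\subseteq F,\,F\cap B=\varnothing}\mathbf{x}^F q^{k(F)}$; $\mathcal{T}_e^f=\mathcal{T}_{\{e\}}^{\{f\}}$, $\mathcal{T}_f^e=\mathcal{T}_{\{f\}}^{\{e\}}$, $\mathcal{T}_{ef}=\mathcal{T}_{\{e,f\}}^{\varnothing}$, $\mathcal{T}^{ef}=\mathcal{T}_{\varnothing}^{\{e,f\}}$, and $\mathcal{M}_{ef}(q)=(\mathcal{T}_e^f\mathcal{T}_f^e-\mathcal{T}_{ef}\mathcal{T}^{ef})/(x_ex_f(1-q))$, which is a polynomial; $\mathcal{M}_{ef}(1)$ is its value at $q=1$. A subset $F\subseteq E^{ef}$ is a paracel if $e$ and $f$ both join the same two distinct connected components of $(V,F)$; equivalently $(V,F+e)$ and $(V,F+f)$ have the same connected components and $k(F+e)=k(F+f)=k(F)-1$. *)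

theory Defs
  imports Main "HOL-Library.Poly_Mapping" "HOL-Computational_Algebra.Polynomial"
begin

(* A finite multigraph: vertex set V, edge set E, and each edge g has endpoints
   ends g = (u, v) (loops: u = v; parallel edges: distinct edges with equal ends). *)

definition conn :: "'v set \<Rightarrow> ('e \<Rightarrow> 'v \<times> 'v) \<Rightarrow> 'e set \<Rightarrow> ('v \<times> 'v) set" where
  "conn V ends F = Restr ((ends ` F \<union> (prod.swap \<circ> ends) ` F)\<^sup>*) V"

definition ncomp :: "'v set \<Rightarrow> ('e \<Rightarrow> 'v \<times> 'v) \<Rightarrow> 'e set \<Rightarrow> nat" where
  "ncomp V ends F = card (V // conn V ends F)"

definition comp :: "'v set \<Rightarrow> ('e \<Rightarrow> 'v \<times> 'v) \<Rightarrow> 'e set \<Rightarrow> 'v \<Rightarrow> 'v set" where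
  "comp V ends F u = conn V ends F `` {u}"

(* Polynomials in the edge variables x_g with coefficients in Z[q]:
   a monomial is an exponent vector 'e \<Rightarrow>\<^sub>0 nat. *)
type_synonym 'e xpoly = "('e \<Rightarrow>\<^sub>0 nat) \<Rightarrow>\<^sub>0 int poly"

definition mexp :: "'e set \<Rightarrow> 'e \<Rightarrow>\<^sub>0 nat" where
  "mexp F = (\<Sum>g\<in>F. Poly_Mapping.single g 1)"

(* T_A^B = sum over F \<subseteq> E, A \<subseteq> F, F \<inter> B = {} of x^F q^{k(F)} *)
definition Tpoly :: "'v set \<Rightarrow> 'e set \<Rightarrow> ('e \<Rightarrow> 'v \<times> 'v) \<Rightarrow> 'e set \<Rightarrow> 'e set \<Rightarrow> 'e xpoly" where
  "Tpoly V E ends A B =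
     (\<Sum>F\<in>{F. F \<subseteq> E \<and> A \<subseteq> F \<and> F \<inter> B = {}}.
        Poly_Mapping.single (mexp F) ([:0, 1:] ^ ncomp V ends F))"

(* M_ef(q) = (T_e^f T_f^e - T_ef T^ef) / (x_e x_f (1 - q)), the (unique) polynomial
   quotient *)
definition Mpoly :: "'v set \<Rightarrow> 'e set \<Rightarrow> ('e \<Rightarrow> 'v \<times> 'v) \<Rightarrow> 'e \<Rightarrow> 'e \<Rightarrow> 'e xpoly" where
  "Mpoly V E ends e f = (THE M.
     Poly_Mapping.single (mexp {e, f}) [:1, -1:] * M =
       Tpoly V E ends {e} {f} * Tpoly V E ends {f} {e}
       - Tpoly V E ends {e, f} {} * Tpoly V E ends {} {e, f})"

definition Mpoly_at1 :: "'v set \<Rightarrow> 'e set \<Rightarrow> ('e \<Rightarrow> 'v \<times> 'v) \<Rightarrow> 'e \<Rightarrow> 'e \<Rightarrow> ('e \<Rightarrow>\<^sub>0 nat) \<Rightarrow>\<^sub>0 int" where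
  "Mpoly_at1 V E ends e f = Poly_Mapping.map (\<lambda>p. poly p 1) (Mpoly V E ends e f)"

definition paracel :: "'v set \<Rightarrow> 'e set \<Rightarrow> ('e \<Rightarrow> 'v \<times> 'v) \<Rightarrow> 'e \<Rightarrow> 'e \<Rightarrow> 'e set \<Rightarrow> bool" where
  "paracel V E ends e f F \<longleftrightarrow> F \<subseteq> E - {e, f} \<and>
     comp V ends F (fst (ends e)) \<noteq> comp V ends F (snd (ends e)) \<and>
     {comp V ends F (fst (ends e)), comp V ends F (snd (ends e))} =
     {comp V ends F (fst (ends f)), comp V ends F (snd (ends f))}"

end

theory Submission
  imports Defs
begin

(* Expanding the four products gives
     M_ef(q) = Sum_{A, B subset E^ef} x^A x^B (q^a - q^b) / (1 - q),
   with a = k(A+e) + k(B+f) and b = k(A+e+f) + k(B), so at q = 1 the coefficient of x^(E^ef)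
   is Sum_A (b - a) over A subset E^ef and B = E^ef - A.  Substituting H = E^ef - A in the
   B-terms turns this into the sum over H of [k(H) - k(H+f)] - [k(H+e) - k(H+e+f)].
   Adding an edge lowers k by one if it joins two components and leaves k unchanged otherwise,
   so the summand is 1 exactly when f joins two components of (V, H) but not of (V, H+e),
   i.e. when H is a paracel, and 0 otherwise. *)

lemma Image_merge_classes:
  assumes r: "equiv V r" and uv: "(u, v) \<notin> r"
  shows "(r \<union> {(x, y). (x, u) \<in> r \<and> (v, y) \<in> r} \<union> {(x, y). (x, v) \<in> r \<and> (u, y) \<in> r}) `` {x}
    = (if x \<in> r `` {u} \<union> r `` {v} then r `` {u} \<union> r `` {v} else r `` {x})"
    (is "?r' `` {x} = _")
proof -
  have s: "(a, b) \<in> r \<Longrightarrow> (b, a) \<in> r" and t: "(a, b) \<in> r \<Longrightarrow> (b, c) \<in> r \<Longrightarrow> (a, c) \<in> r" for a b c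
    using r unfolding equiv_def by (meson symE, meson transE)
  have mem: "y \<in> ?r' `` {x} \<longleftrightarrow> (x, y) \<in> r \<or> (x, u) \<in> r \<and> (v, y) \<in> r \<or> (x, v) \<in> r \<and> (u, y) \<in> r" for y
    by blast
  consider "(x, u) \<in> r" | "(x, v) \<in> r" | "(x, u) \<notin> r" "(x, v) \<notin> r" by blast
  then show ?thesis
  proof cases
    case 1
    then have "(x, v) \<notin> r" and "(x, y) \<in> r \<longleftrightarrow> (u, y) \<in> r" for y using s t uv by blast+
    then show ?thesis using mem 1 s by auto
  next
    case 2
    then have "(x, u) \<notin> r" and "(x, y) \<in> r \<longleftrightarrow> (v, y) \<in> r" for y using s t uv by blast+
    then show ?thesis using mem 2 s by auto
  next
    case 3
    then show ?thesis using mem s by auto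
  qed
qed

lemma quotient_merge_classes:
  assumes r: "equiv V r" and uv: "u \<in> V" "v \<in> V" "(u, v) \<notin> r"
  shows "V // (r \<union> {(x, y). (x, u) \<in> r \<and> (v, y) \<in> r} \<union> {(x, y). (x, v) \<in> r \<and> (u, y) \<in> r})
    = insert (r `` {u} \<union> r `` {v}) (V // r - {r `` {u}, r `` {v}})"
    (is "V // ?r' = insert (?A \<union> ?B) (V // r - {?A, ?B})")
proof (intro equalityI subsetI)
  have self: "x \<in> r `` {x}" if "x \<in> V" for x using r that by (rule equiv_class_self)
  fix C
  { assume "C \<in> V // ?r'"
    then obtain x where "x \<in> V" "C = ?r' `` {x}" by (rule quotientE)
    moreover have "r `` {x} \<noteq> ?A" "r `` {x} \<noteq> ?B" if "x \<in> V" "x \<notin> ?A \<union> ?B" for x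
      using self that by auto
    ultimately show "C \<in> insert (?A \<union> ?B) (V // r - {?A, ?B})"
      using Image_merge_classes[OF r uv(3)] by (auto intro: quotientI) }
  { assume C: "C \<in> insert (?A \<union> ?B) (V // r - {?A, ?B})"
    show "C \<in> V // ?r'"
    proof (cases "C = ?A \<union> ?B")
      case True
      have "?r' `` {u} = ?A \<union> ?B" using Image_merge_classes[OF r uv(3)] self[OF uv(1)] by simp
      then show ?thesis using True quotientI[OF uv(1)] by metis
    next
      case False
      with C have "C \<in> V // r" "C \<noteq> ?A" "C \<noteq> ?B" by auto
      then obtain x where x: "x \<in> V" "C = r `` {x}" by (auto elim: quotientE)
      with \<open>C \<noteq> ?A\<close> \<open>C \<noteq> ?B\<close> have "x \<notin> ?A \<union> ?B" using equiv_class_eq[OF r] by blast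
      then have "?r' `` {x} = C" using Image_merge_classes[OF r uv(3)] x(2) by simp
      then show ?thesis using quotientI[OF x(1)] by metis
    qed }
qed

lemma card_quotient_merge_classes:
  assumes "finite V" and r: "equiv V r" and uv: "u \<in> V" "v \<in> V" "(u, v) \<notin> r"
  shows "card (V // (r \<union> {(x, y). (x, u) \<in> r \<and> (v, y) \<in> r} \<union> {(x, y). (x, v) \<in> r \<and> (u, y) \<in> r})) + 1
    = card (V // r)"
proof -
  let ?A = "r `` {u}" and ?B = "r `` {v}"
  have fin: "finite (V // r)" using assms(1) r by (auto intro: finite_quotient simp: equiv_def)
  have AB: "?A \<in> V // r" "?B \<in> V // r" "?A \<noteq> ?B"
    using uv by (auto intro: quotientI simp: equiv_class_eq_iff[OF r])
  have "?A \<union> ?B \<notin> V // r - {?A, ?B}"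
    using quotient_disj[OF r AB(1)] equiv_class_self[OF r uv(1)] by blast
  moreover have "card {?A, ?B} \<le> card (V // r)" using fin AB by (intro card_mono) auto
  ultimately show ?thesis
    unfolding quotient_merge_classes[OF r uv] using fin AB by (simp add: card_Diff_subset)
qed

lemma rtrancl_insert_undirected:
  "(insert (u, v) (insert (v, u) R))\<^sup>* =
     R\<^sup>* \<union> {(x, y). (x, u) \<in> R\<^sup>* \<and> (v, y) \<in> R\<^sup>*} \<union> {(x, y). (x, v) \<in> R\<^sup>* \<and> (u, y) \<in> R\<^sup>*}"
  by (auto simp: rtrancl_insert intro: rtrancl_trans)

lemma sym_edge_pairs: "sym (ends ` F \<union> (prod.swap \<circ> ends) ` F)"
  unfolding sym_def by (auto simp: image_iff) (metis swap_simp swap_swap)+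

lemma conn_equiv: "equiv V (conn V ends F)"
  unfolding conn_def using sym_rtrancl[OF sym_edge_pairs, of ends F]
  by (intro equivI) (auto simp: refl_on_def sym_def trans_def)

lemma conn_mono: "F \<subseteq> F' \<Longrightarrow> conn V ends F \<subseteq> conn V ends F'"
  unfolding conn_def by (intro Int_mono rtrancl_mono) auto

lemma conn_insert:
  assumes "fst (ends g) \<in> V" "snd (ends g) \<in> V"
  shows "conn V ends (insert g F) = conn V ends F
     \<union> {(x, y). (x, fst (ends g)) \<in> conn V ends F \<and> (snd (ends g), y) \<in> conn V ends F}
     \<union> {(x, y). (x, snd (ends g)) \<in> conn V ends F \<and> (fst (ends g), y) \<in> conn V ends F}"
proof -
  obtain u v where g: "ends g = (u, v)" by fastforce
  have edges: "ends ` insert g F \<union> (prod.swap \<circ> ends) ` insert g F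
      = insert (u, v) (insert (v, u) (ends ` F \<union> (prod.swap \<circ> ends) ` F))"
    using g by auto
  show ?thesis
    using assms g unfolding conn_def edges rtrancl_insert_undirected by auto
qed

lemma ncomp_insert:
  assumes "finite V" "fst (ends g) \<in> V" "snd (ends g) \<in> V"
  shows "ncomp V ends F = ncomp V ends (insert g F)
    + (if (fst (ends g), snd (ends g)) \<in> conn V ends F then 0 else 1)"
proof (cases "(fst (ends g), snd (ends g)) \<in> conn V ends F")
  case True
  have "sym (conn V ends F)" "trans (conn V ends F)"
    using conn_equiv[of V ends F] by (auto simp: equiv_def)
  then have "(x, fst (ends g)) \<in> conn V ends F \<Longrightarrow> (snd (ends g), y) \<in> conn V ends F \<Longrightarrow> (x, y) \<in> conn V ends F"
    "(x, snd (ends g)) \<in> conn V ends F \<Longrightarrow> (fst (ends g), y) \<in> conn V ends F \<Longrightarrow> (x, y) \<in> conn V ends F"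
    for x y using True by (meson symD transD)+
  then have "conn V ends (insert g F) = conn V ends F"
    unfolding conn_insert[of ends g V F, OF assms(2,3)] by blast
  then show ?thesis using True unfolding ncomp_def by simp
next
  case False
  show ?thesis
    using card_quotient_merge_classes[OF assms(1) conn_equiv assms(2,3) False] False
    unfolding ncomp_def conn_insert[of ends g V F, OF assms(2,3)] by simp
qed

lemma comp_eq_iff:
  "x \<in> V \<Longrightarrow> y \<in> V \<Longrightarrow> comp V ends F x = comp V ends F y \<longleftrightarrow> (x, y) \<in> conn V ends F"
  unfolding comp_def by (simp add: equiv_class_eq_iff[OF conn_equiv])

lemma distinct_doubleton_eq_iff:
  "a \<noteq> b \<and> {a, b} = {c, d} \<longleftrightarrow> c \<noteq> d \<and> (c = a \<and> d = b \<or> c = b \<and> d = a)"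
  by (auto simp: doubleton_eq_iff)

lemma paracel_iff_joins:
  assumes V: "fst (ends e) \<in> V" "snd (ends e) \<in> V" "fst (ends f) \<in> V" "snd (ends f) \<in> V"
    and "F \<subseteq> E - {e, f}"
  shows "paracel V E ends e f F \<longleftrightarrow>
    (fst (ends f), snd (ends f)) \<notin> conn V ends F \<and> (fst (ends f), snd (ends f)) \<in> conn V ends (insert e F)"
proof -
  obtain ue ve uf vf where ends: "ends e = (ue, ve)" "ends f = (uf, vf)" by fastforce
  define C where "C = comp V ends F"
  have V': "ue \<in> V" "ve \<in> V" "uf \<in> V" "vf \<in> V" using V ends by auto
  have conn_iff: "(x, y) \<in> conn V ends F \<longleftrightarrow> C x = C y" if "x \<in> V" "y \<in> V" for x y
    unfolding C_def using comp_eq_iff[OF that, of ends F] by simp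
  have insert_iff: "(uf, vf) \<in> conn V ends (insert e F) \<longleftrightarrow>
      C uf = C vf \<or> C uf = C ue \<and> C ve = C vf \<or> C uf = C ve \<and> C ue = C vf"
    using conn_insert[of ends e V F] V ends V' by (simp add: conn_iff)
  have "paracel V E ends e f F \<longleftrightarrow> C ue \<noteq> C ve \<and> {C ue, C ve} = {C uf, C vf}"
    unfolding paracel_def C_def using assms(5) ends by simp
  also have "\<dots> \<longleftrightarrow> C uf \<noteq> C vf \<and> (C uf = C ue \<and> C vf = C ve \<or> C uf = C ve \<and> C vf = C ue)"
    by (rule distinct_doubleton_eq_iff)
  also have "\<dots> \<longleftrightarrow> (uf, vf) \<notin> conn V ends F \<and> (uf, vf) \<in> conn V ends (insert e F)"
    unfolding insert_iff conn_iff[OF V'(3,4)] by argo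
  finally show ?thesis unfolding ends by simp
qed

lemma ncomp_paracel_indicator:
  assumes "finite V"
    and V: "fst (ends e) \<in> V" "snd (ends e) \<in> V" "fst (ends f) \<in> V" "snd (ends f) \<in> V"
    and "F \<subseteq> E - {e, f}"
  shows "(int (ncomp V ends F) - int (ncomp V ends (insert f F)))
     - (int (ncomp V ends (insert e F)) - int (ncomp V ends (insert e (insert f F))))
     = of_bool (paracel V E ends e f F)"
proof -
  have "conn V ends F \<subseteq> conn V ends (insert e F)" by (rule conn_mono) blast
  then show ?thesis
    using ncomp_insert[of V ends f F, OF assms(1) V(3,4)] ncomp_insert[of V ends f "insert e F", OF assms(1) V(3,4)]
      paracel_iff_joins[OF V assms(6)] by (auto simp: insert_commute)
qed

lemma lookup_map_zero:
  "f 0 = 0 \<Longrightarrow> Poly_Mapping.lookup (Poly_Mapping.map f p) k = f (Poly_Mapping.lookup p k)"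
  by transfer (auto simp: when_def)

lemma lookup_single_mult:
  fixes c :: "'b::comm_semiring_1" and m k :: "'a::cancel_comm_monoid_add"
  shows "Poly_Mapping.lookup (Poly_Mapping.single m c * p) (m + k) = c * Poly_Mapping.lookup p k"
proof -
  have "Poly_Mapping.lookup (Poly_Mapping.single m c * p) (m + k) =
      (\<Sum>l. Poly_Mapping.lookup (Poly_Mapping.single m c) l * (\<Sum>q. Poly_Mapping.lookup p q when m + k = l + q))"
    by (rule lookup_mult)
  also have "\<dots> = (\<Sum>l. if m = l then c * (\<Sum>q. Poly_Mapping.lookup p q when m + k = l + q) else 0)"
    by (rule Sum_any.cong) (simp add: lookup_single when_def)
  also have "\<dots> = c * Poly_Mapping.lookup p k"
    by (simp add: when_def)
  finally show ?thesis .
qed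

lemma single_mult_left_cancel:
  fixes c :: "'b::idom" and m :: "'a::cancel_comm_monoid_add"
  assumes "c \<noteq> 0" "Poly_Mapping.single m c * p = Poly_Mapping.single m c * r"
  shows "p = r"
proof (rule poly_mapping_eqI)
  fix k
  have "c * Poly_Mapping.lookup p k = c * Poly_Mapping.lookup r k"
    using lookup_single_mult[of m c p k] lookup_single_mult[of m c r k] assms(2) by metis
  then show "Poly_Mapping.lookup p k = Poly_Mapping.lookup r k" using assms(1) by simp
qed

lemma the_single_mult_eq:
  fixes c :: "'b::idom" and m :: "'a::cancel_comm_monoid_add"
  assumes "P = Poly_Mapping.single m c * M" "c \<noteq> 0"
  shows "(THE M. Poly_Mapping.single m c * M = P) = M"
proof (rule the_equality)
  fix M'
  assume "Poly_Mapping.single m c * M' = P"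
  then have "Poly_Mapping.single m c * M' = Poly_Mapping.single m c * M" using assms(1) by (rule trans)
  then show "M' = M" by (rule single_mult_left_cancel[OF assms(2)])
qed (rule assms(1)[symmetric])

lemma lookup_mexp: "finite A \<Longrightarrow> Poly_Mapping.lookup (mexp A) g = of_bool (g \<in> A)"
  unfolding mexp_def by (simp add: lookup_sum lookup_single when_def)

lemma mexp_Un_disjoint: "finite A \<Longrightarrow> finite B \<Longrightarrow> A \<inter> B = {} \<Longrightarrow> mexp (A \<union> B) = mexp A + mexp B"
  unfolding mexp_def by (rule sum.union_disjoint)

lemma mexp_add_eq_mexp_iff:
  assumes "finite C" "A \<subseteq> C" "B \<subseteq> C"
  shows "mexp A + mexp B = mexp C \<longleftrightarrow> B = C - A"
proof
  have fin: "finite A" "finite B" using assms finite_subset by auto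
  assume sum: "mexp A + mexp B = mexp C"
  have count: "of_bool (g \<in> A) + of_bool (g \<in> B) = (of_bool (g \<in> C) :: nat)" for g
    using arg_cong[OF sum, of "\<lambda>p. Poly_Mapping.lookup p g"] by (simp add: lookup_add lookup_mexp fin assms(1))
  show "B = C - A"
  proof (rule set_eqI)
    fix g
    show "g \<in> B \<longleftrightarrow> g \<in> C - A"
      using count[of g] by (cases "g \<in> A"; cases "g \<in> B"; cases "g \<in> C") simp_all
  qed
next
  assume "B = C - A"
  then show "mexp A + mexp B = mexp C"
    using mexp_Un_disjoint[of A "C - A"] finite_subset[OF _ assms(1)] assms(2) by (simp add: Un_absorb1)
qed

lemma Tpoly_eq_sum_Pow:
  assumes "finite E" "A \<subseteq> E" "A \<inter> B = {}"
  shows "Tpoly V E ends A B = (\<Sum>X\<in>Pow (E - (A \<union> B)).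
     Poly_Mapping.single (mexp A + mexp X) ([:0, 1:] ^ ncomp V ends (A \<union> X)))"
  unfolding Tpoly_def
proof (rule sum.reindex_bij_witness[of _ "\<lambda>X. A \<union> X" "\<lambda>F. F - A"])
  fix F assume "F \<in> {F. F \<subseteq> E \<and> A \<subseteq> F \<and> F \<inter> B = {}}"
  moreover have "finite A" "finite (F - A)" if "F \<subseteq> E"
    using assms that by (auto intro: finite_subset)
  ultimately show "Poly_Mapping.single (mexp A + mexp (F - A)) ([:0, 1:] ^ ncomp V ends (A \<union> (F - A)))
      = Poly_Mapping.single (mexp F) ([:0, 1:] ^ ncomp V ends F)"
    using mexp_Un_disjoint[of A "F - A"] by (simp add: Un_absorb1)
qed (use assms in auto)

definition power_diff_quot :: "nat \<Rightarrow> nat \<Rightarrow> int poly" where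
  "power_diff_quot a b = (\<Sum>i<b. [:0, 1:] ^ i) - (\<Sum>i<a. [:0, 1:] ^ i)"

lemma mult_power_diff_quot: "[:1, -1:] * power_diff_quot a b = [:0, 1:] ^ a - [:0, 1:] ^ b"
proof -
  have "[:1, -1:] = (1 - [:0, 1:] :: int poly)" by (simp add: one_pCons)
  then show ?thesis
    unfolding power_diff_quot_def right_diff_distrib by (simp add: one_diff_power_eq[symmetric])
qed

lemma poly_power_diff_quot_1: "poly (power_diff_quot a b) 1 = int b - int a"
  unfolding power_diff_quot_def by (simp add: poly_sum)

lemma Mpoly_eq_sum:
  assumes "finite E" "e \<in> E" "f \<in> E" "e \<noteq> f"
  shows "Mpoly V E ends e f = (\<Sum>A\<in>Pow (E - {e, f}). \<Sum>B\<in>Pow (E - {e, f}).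
    Poly_Mapping.single (mexp A + mexp B)
      (power_diff_quot (ncomp V ends (insert e A) + ncomp V ends (insert f B))
                       (ncomp V ends (insert e (insert f A)) + ncomp V ends B)))"
    (is "_ = ?M")
proof -
  let ?q = "[:0, 1:] :: int poly" and ?k = "ncomp V ends" and ?P = "Pow (E - {e, f})"
  have T: "Tpoly V E ends A B = (\<Sum>X\<in>?P. Poly_Mapping.single (mexp A + mexp X) (?q ^ ?k (A \<union> X)))"
    if "A \<union> B = {e, f}" "A \<inter> B = {}" for A B
  proof -
    have "A \<subseteq> {e, f}" unfolding that(1)[symmetric] by (rule Un_upper1)
    then have "A \<subseteq> E" using assms(2,3) by auto
    from Tpoly_eq_sum_Pow[OF assms(1) this that(2)] show ?thesis unfolding that(1) .
  qed
  have mexp_ef: "mexp {e} + mexp {f} = mexp {e, f}" "mexp {} = 0"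
    using assms(4) by (simp_all add: mexp_def)
  have ef: "{e} \<union> {f} = {e, f}" "{e} \<inter> {f} = {}" "{f} \<union> {e} = {e, f}" "{f} \<inter> {e} = {}"
    using assms(4) by auto
  have "Tpoly V E ends {e} {f} * Tpoly V E ends {f} {e} =
      (\<Sum>A\<in>?P. \<Sum>B\<in>?P. Poly_Mapping.single (mexp {e, f} + (mexp A + mexp B))
          (?q ^ (?k (insert e A) + ?k (insert f B))))"
    unfolding T[OF ef(1,2)] T[OF ef(3,4)] sum_product
    by (intro sum.cong refl) (simp add: mult_single power_add mexp_ef(1)[symmetric] ac_simps)
  moreover have "Tpoly V E ends {e, f} {} * Tpoly V E ends {} {e, f} =
      (\<Sum>A\<in>?P. \<Sum>B\<in>?P. Poly_Mapping.single (mexp {e, f} + (mexp A + mexp B))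
          (?q ^ (?k (insert e (insert f A)) + ?k B)))"
    unfolding T[OF Un_empty_right Int_empty_right] T[OF Un_empty_left Int_empty_left] sum_product
    by (intro sum.cong refl) (simp add: mult_single power_add mexp_ef(2) ac_simps)
  ultimately have "Tpoly V E ends {e} {f} * Tpoly V E ends {f} {e} - Tpoly V E ends {e, f} {} * Tpoly V E ends {} {e, f}
      = (\<Sum>A\<in>?P. \<Sum>B\<in>?P. Poly_Mapping.single (mexp {e, f} + (mexp A + mexp B))
          (?q ^ (?k (insert e A) + ?k (insert f B)) - ?q ^ (?k (insert e (insert f A)) + ?k B)))"
    by (simp only: sum_subtractf[symmetric] single_diff)
  also have "\<dots> = Poly_Mapping.single (mexp {e, f}) [:1, -1:] * ?M"
    by (simp only: sum_distrib_left mult_single mult_power_diff_quot)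
  finally show ?thesis
    unfolding Mpoly_def by (rule the_single_mult_eq) simp
qed

lemma lookup_Mpoly_at1_mexp:
  assumes "finite E" "e \<in> E" "f \<in> E" "e \<noteq> f"
  shows "Poly_Mapping.lookup (Mpoly_at1 V E ends e f) (mexp (E - {e, f})) =
    (\<Sum>A\<in>Pow (E - {e, f}).
      (int (ncomp V ends (insert e (insert f A))) - int (ncomp V ends (insert e A)))
      + (int (ncomp V ends (E - {e, f} - A)) - int (ncomp V ends (insert f (E - {e, f} - A)))))"
proof -
  let ?E' = "E - {e, f}" and ?k = "ncomp V ends"
  let ?c = "\<lambda>A B. poly (power_diff_quot (?k (insert e A) + ?k (insert f B))
                                        (?k (insert e (insert f A)) + ?k B)) 1"
  have fin: "finite ?E'" using assms(1) by simp
  have "Poly_Mapping.lookup (Mpoly_at1 V E ends e f) (mexp ?E') =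
      (\<Sum>A\<in>Pow ?E'. \<Sum>B\<in>Pow ?E'. if mexp A + mexp B = mexp ?E' then ?c A B else 0)"
    unfolding Mpoly_at1_def Mpoly_eq_sum[OF assms]
    by (simp add: lookup_map_zero lookup_sum lookup_single poly_sum when_def if_distrib[of "\<lambda>p. poly p 1"] cong: if_cong)
  also have "\<dots> = (\<Sum>A\<in>Pow ?E'. \<Sum>B\<in>Pow ?E'. if B = ?E' - A then ?c A B else 0)"
    using mexp_add_eq_mexp_iff[OF fin] by (intro sum.cong refl) auto
  also have "\<dots> = (\<Sum>A\<in>Pow ?E'. ?c A (?E' - A))"
    using fin by (intro sum.cong refl) (auto simp: sum.delta)
  finally show ?thesis
    by (simp add: poly_power_diff_quot_1 algebra_simps)
qed

theorem proposition4p3: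
  fixes V :: "'v set" and E :: "'e set" and ends :: "'e \<Rightarrow> 'v \<times> 'v" and e f :: 'e
  assumes "finite V" and "finite E"
    and "\<forall>g\<in>E. fst (ends g) \<in> V \<and> snd (ends g) \<in> V"
    and "e \<in> E" and "f \<in> E" and "e \<noteq> f"
  shows "Poly_Mapping.lookup (Mpoly_at1 V E ends e f) (mexp (E - {e, f}))
           = int (card {F. F \<subseteq> E - {e, f} \<and> paracel V E ends e f F})"
proof -
  let ?E' = "E - {e, f}" and ?k = "\<lambda>F. int (ncomp V ends F)"
  have ends_V: "fst (ends e) \<in> V" "snd (ends e) \<in> V" "fst (ends f) \<in> V" "snd (ends f) \<in> V"
    using assms(3-5) by auto
  have "(\<Sum>A\<in>Pow ?E'. ?k (?E' - A) - ?k (insert f (?E' - A))) = (\<Sum>H\<in>Pow ?E'. ?k H - ?k (insert f H))"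
    by (rule sum.reindex_bij_witness[of _ "\<lambda>A. ?E' - A" "\<lambda>A. ?E' - A"]) auto
  then have "Poly_Mapping.lookup (Mpoly_at1 V E ends e f) (mexp ?E') =
      (\<Sum>H\<in>Pow ?E'. (?k H - ?k (insert f H)) - (?k (insert e H) - ?k (insert e (insert f H))))"
    unfolding lookup_Mpoly_at1_mexp[OF assms(2,4-6)] sum.distrib by (simp add: sum_subtractf)
  also have "\<dots> = (\<Sum>H\<in>Pow ?E'. of_bool (paracel V E ends e f H))"
    by (intro sum.cong refl) (simp add: ncomp_paracel_indicator[of V ends e f, OF assms(1) ends_V])
  also have "\<dots> = int (card {F. F \<subseteq> ?E' \<and> paracel V E ends e f F})"
    using assms(2) by (simp add: Int_def)
  finally show ?thesis .
qed

end
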